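(* Let $m\ge2$ and let $\mathbb{A}=(a_{i_1i_2\ldots i_m})$ be a nonnegative strongly primitive tensor of order $m$ and dimension $n$. Then for every $\alpha\in[n]^{m-1}$ there exists $i\in[n]$ such that $a_{i\alpha}>0$.
   Context: General product of dimension-$n$ tensors: for $\mathbb{A}$ of order $m\ge2$ and $\mathbb{B}$ of order $k\ge1$, $(\mathbb{A}\mathbb{B})_{i\alpha_1\ldots\alpha_{m-1}}=\sum_{i_2,\ldots,i_m=1}^n a_{ii_2\ldots i_m}b_{i_2\alpha_1}\cdots b_{i_m\alpha_{m-1}}$ ($i\in[n]$, $\alpha_l\in[n]^{k-1}$), a tensor of order $(m-1)(k-1)+1$; it is associative and $\mathbb{A}^k$ denotes the $k$-fold power (of order $(m-1)^k+1$). A nonnegative tensor $\mathbb{A}$ is strongly primitive if there is a positive integer $k$ such that all entries of $\mathbb{A}^k$ are positive. *)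

theory Defs
  imports Complex_Main
begin

text \<open>A tensor of order m and dimension n is a function on index lists;
  only lists of length m with entries in {..<n} (0-based version of [n]) matter.\<close>

type_synonym tensor = "nat list \<Rightarrow> real"

definition idx_lists :: "nat \<Rightarrow> nat \<Rightarrow> nat list set" where
  "idx_lists n l = {xs. length xs = l \<and> set xs \<subseteq> {..<n}}"

text \<open>General product of A (order m) and B (order k), dimension n:
  (AB)(i, alpha_1, ..., alpha_{m-1}) =
    sum over i_2..i_m of a(i,i_2..i_m) * prod_l b(i_{l+1}, alpha_l),
  where the index list after i is split into consecutive blocks alpha_l of length k-1.\<close>

definition tprod :: "nat \<Rightarrow> nat \<Rightarrow> nat \<Rightarrow> tensor \<Rightarrow> tensor \<Rightarrow> tensor" where
  "tprod n m k A B = (\<lambda>idx.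
     \<Sum>js\<in>idx_lists n (m - 1).
        A (hd idx # js) *
        (\<Prod>l<m - 1. B (js ! l # take (k - 1) (drop (1 + l * (k - 1)) idx))))"

fun tpow :: "nat \<Rightarrow> nat \<Rightarrow> tensor \<Rightarrow> nat \<Rightarrow> tensor" where
  "tpow n m A 0 = A"
| "tpow n m A (Suc 0) = A"
| "tpow n m A (Suc (Suc k)) =
     tprod n ((m - 1) ^ Suc k + 1) m (tpow n m A (Suc k)) A"

definition nonneg_tensor :: "nat \<Rightarrow> nat \<Rightarrow> tensor \<Rightarrow> bool" where
  "nonneg_tensor n m A \<longleftrightarrow> (\<forall>idx\<in>idx_lists n m. 0 \<le> A idx)"

definition strongly_primitive :: "nat \<Rightarrow> nat \<Rightarrow> tensor \<Rightarrow> bool" where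
  "strongly_primitive n m A \<longleftrightarrow>
     (\<exists>k>0. \<forall>idx\<in>idx_lists n ((m - 1) ^ k + 1). 0 < tpow n m A k idx)"

end

theory Submission
  imports Defs
begin

text \<open>If the fibre \<open>A(\<cdot>, \<alpha>)\<close> vanishes, then so does every power \<open>A^k\<close> at any index whose
  first block after the leading index is \<open>\<alpha>\<close>: writing \<open>A^k = A^(k-1) A\<close>, every summand
  contains a factor \<open>A(j, \<alpha>)\<close>. Since an index with first block \<open>\<alpha>\<close> exists in every order
  \<open>(m-1)^k+1\<close>, no power of \<open>A\<close> can then be positive.\<close>

lemma tprod_eq_0_if_zero_fibre:
  assumes zero_fibre: "\<And>j. j < n \<Longrightarrow> B (j # \<beta>) = 0"
    and first_block: "take (k - 1) (drop 1 idx) = \<beta>"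
    and "M \<ge> 2"
  shows "tprod n M k A B idx = 0"
  unfolding tprod_def
proof (rule sum.neutral, rule ballI)
  fix js assume "js \<in> idx_lists n (M - 1)"
  then have "length js = M - 1" and "set js \<subseteq> {..<n}"
    by (auto simp: idx_lists_def)
  moreover from \<open>length js = M - 1\<close> \<open>M \<ge> 2\<close> have "js ! 0 \<in> set js"
    by (intro nth_mem) simp
  ultimately have "js ! 0 < n"
    by auto
  then have "B (js ! 0 # take (k - 1) (drop (1 + 0 * (k - 1)) idx)) = 0"
    using zero_fibre first_block by simp
  moreover have "(0::nat) \<in> {..<M - 1}"
    using \<open>M \<ge> 2\<close> by simp
  ultimately have "(\<Prod>l<M - 1. B (js ! l # take (k - 1) (drop (1 + l * (k - 1)) idx))) = 0"
    by (intro prod_zero bexI[of _ 0]) simp_all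
  then show "A (hd idx # js) *
      (\<Prod>l<M - 1. B (js ! l # take (k - 1) (drop (1 + l * (k - 1)) idx))) = 0"
    by simp
qed

lemma tpow_eq_0_if_zero_fibre:
  assumes zero_fibre: "\<And>j. j < n \<Longrightarrow> A (j # \<alpha>) = 0"
    and "m \<ge> 2" and "k > 0"
    and idx: "idx \<in> idx_lists n ((m - 1) ^ k + 1)"
    and first_block: "take (m - 1) (drop 1 idx) = \<alpha>"
  shows "tpow n m A k idx = 0"
proof -
  consider "k = 1" | j where "k = Suc (Suc j)"
    using \<open>k > 0\<close> by (metis One_nat_def gr0_implies_Suc not0_implies_Suc)
  then show ?thesis
  proof cases
    case 1
    with idx have "length idx = m" and "set idx \<subseteq> {..<n}"
      using \<open>m \<ge> 2\<close> by (auto simp: idx_lists_def)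
    then have "idx = hd idx # \<alpha>" and "hd idx < n"
      using first_block \<open>m \<ge> 2\<close> by (cases idx; auto)+
    then show ?thesis
      using 1 zero_fibre by (metis tpow.simps(2) One_nat_def)
  next
    case (2 j)
    have "(m - 1) ^ Suc j + 1 \<ge> 2"
      using \<open>m \<ge> 2\<close> by simp
    with zero_fibre first_block show ?thesis
      unfolding 2 tpow.simps by (rule tprod_eq_0_if_zero_fibre[where \<beta> = \<alpha> and B = A])
  qed
qed

lemma zero_fibre_if_nonneg:
  assumes "nonneg_tensor n m A" and "\<alpha> \<in> idx_lists n (m - 1)" and "m \<ge> 1"
    and "\<not> (\<exists>i<n. 0 < A (i # \<alpha>))" and "j < n"
  shows "A (j # \<alpha>) = 0"
proof -
  have "j # \<alpha> \<in> idx_lists n m"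
    using assms(2,3,5) by (auto simp: idx_lists_def)
  then show ?thesis
    using assms(1,4,5) by (force simp: nonneg_tensor_def)
qed

theorem proposition4p14:
  fixes n m :: nat and A :: tensor
  assumes "m \<ge> 2"
    and "nonneg_tensor n m A"
    and "strongly_primitive n m A"
  shows "\<forall>\<alpha>\<in>idx_lists n (m - 1). \<exists>i<n. 0 < A (i # \<alpha>)"
proof (rule ballI, rule ccontr)
  fix \<alpha> assume \<alpha>: "\<alpha> \<in> idx_lists n (m - 1)" and "\<not> (\<exists>i<n. 0 < A (i # \<alpha>))"
  then have zero_fibre: "\<And>j. j < n \<Longrightarrow> A (j # \<alpha>) = 0"
    using assms(1,2) zero_fibre_if_nonneg by simp
  obtain k where "k > 0" and pos: "\<forall>idx\<in>idx_lists n ((m - 1) ^ k + 1). 0 < tpow n m A k idx"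
    using assms(3) by (auto simp: strongly_primitive_def)
  have "length \<alpha> = m - 1" and "set \<alpha> \<subseteq> {..<n}"
    using \<alpha> by (auto simp: idx_lists_def)
  define idx where "idx = 0 # \<alpha> @ replicate ((m - 1) ^ k - (m - 1)) 0"
  have "n > 0"
    using \<open>length \<alpha> = m - 1\<close> \<open>set \<alpha> \<subseteq> {..<n}\<close> assms(1) by (cases \<alpha>) auto
  moreover have "m - 1 \<le> (m - 1) ^ k"
    using assms(1) \<open>k > 0\<close> power_increasing[of 1 k "m - 1"] by simp
  ultimately have idx_in: "idx \<in> idx_lists n ((m - 1) ^ k + 1)"
    using \<open>length \<alpha> = m - 1\<close> \<open>set \<alpha> \<subseteq> {..<n}\<close> by (auto simp: idx_def idx_lists_def)
  have "take (m - 1) (drop 1 idx) = \<alpha>"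
    using \<open>length \<alpha> = m - 1\<close> by (simp add: idx_def)
  with zero_fibre assms(1) \<open>k > 0\<close> idx_in
  have "tpow n m A k idx = 0"
    by (rule tpow_eq_0_if_zero_fibre)
  moreover have "0 < tpow n m A k idx"
    using pos idx_in by blast
  ultimately show False
    by simp
qed

end
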